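(* Under the standing setup, with $x^*(g,h)$ the limit of the opinion dynamics, the quantity $f(g,h)\triangleq c^\top x^*(g,h)$ satisfies $$f(g,h)=\frac{(1-2\beta+(h-g)\gamma)\widehat s-\chi+(h+g)\beta+(g^2-h^2)\gamma}{1-\lambda+(g-h)\gamma}\;c^\top\mathbf 1.$$
   Context: Standing setup. Fix $n\in\mathbb N$ and $W=[w_{ij}]\in\mathbb R^{n\times n}$ with $w_{ij}\ge 0$ and $w_{ii}=0$. Let $\|W\|_\infty=\max_i\sum_j|w_{ij}|$, $\|W\|_1=\max_j\sum_i|w_{ij}|$, and let $\lambda$ be the spectral radius of $W$; assume there is a vector $c\in\mathbb R^n$ with all entries positive and $W^\top c=\lambda c$. Fix $\beta,\gamma$ with $\beta\ge\gamma\ge0$ and $1-\max\{\|W\|_\infty,\|W\|_1\}>\max\{2\beta,4\gamma\}$. Fix $s\in[0,1]^n$, $\overline s=\max_i s_i$, $\underline s=\min_i s_i$, and $g,h$ with $0\le g\le\underline s\le\overline s\le h\le1$. Set $\widehat c_i=c_i/\sum_j c_j$, $\widehat s=\sum_i\widehat c_i s_i$, $\chi=\sum_i\widehat c_i s_i\sum_j w_{ij}$. For $x\in\mathbb R$ set $\overline w(x)=\beta-\gamma|x-h|$, $\underline w(x)=\beta-\gamma|x-g|$, $\alpha_i(x)=1-\sum_j w_{ij}-\overline w(x)-\underline w(x)$; the opinion dynamics are $x_i(k+1)=\alpha_i(x_i(k))s_i+\sum_j w_{ij}x_j(k)+\overline w(x_i(k))h+\underline w(x_i(k))g$, which converge (from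 any $x(0)\in[0,1]^n$) to a point $x^*(g,h)$ independent of $x(0)$. *)

theory Defs
  imports "HOL-Analysis.Analysis"
begin

definition norm_inf :: "real^'n^'n \<Rightarrow> real" where
  "norm_inf W = Max (range (\<lambda>i. \<Sum>j\<in>UNIV. \<bar>W$i$j\<bar>))"

definition norm_one :: "real^'n^'n \<Rightarrow> real" where
  "norm_one W = Max (range (\<lambda>j. \<Sum>i\<in>UNIV. \<bar>W$i$j\<bar>))"

definition spec_radius :: "real^'n^'n \<Rightarrow> real" where
  "spec_radius W = Sup {cmod \<mu> | \<mu>. \<exists>v::complex^'n. v \<noteq> 0 \<and>
      (\<chi> i j. complex_of_real (W$i$j)) *v v = \<mu> *s v}"

definition wbar :: "real \<Rightarrow> real \<Rightarrow> real \<Rightarrow> real \<Rightarrow> real" where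
  "wbar \<beta> \<gamma> h x = \<beta> - \<gamma> * \<bar>x - h\<bar>"

definition wund :: "real \<Rightarrow> real \<Rightarrow> real \<Rightarrow> real \<Rightarrow> real" where
  "wund \<beta> \<gamma> g x = \<beta> - \<gamma> * \<bar>x - g\<bar>"

definition alpha :: "real^'n^'n \<Rightarrow> real \<Rightarrow> real \<Rightarrow> real \<Rightarrow> real \<Rightarrow> 'n \<Rightarrow> real \<Rightarrow> real" where
  "alpha W \<beta> \<gamma> g h i x = 1 - (\<Sum>j\<in>UNIV. W$i$j) - wbar \<beta> \<gamma> h x - wund \<beta> \<gamma> g x"

definition opinion_step ::
  "real^'n^'n \<Rightarrow> real \<Rightarrow> real \<Rightarrow> real^'n \<Rightarrow> real \<Rightarrow> real \<Rightarrow> real^'n \<Rightarrow> real^'n" where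
  "opinion_step W \<beta> \<gamma> s g h x = (\<chi> i.
      alpha W \<beta> \<gamma> g h i (x$i) * s$i + (\<Sum>j\<in>UNIV. W$i$j * x$j)
      + wbar \<beta> \<gamma> h (x$i) * h + wund \<beta> \<gamma> g (x$i) * g)"

definition opinion_traj ::
  "real^'n^'n \<Rightarrow> real \<Rightarrow> real \<Rightarrow> real^'n \<Rightarrow> real \<Rightarrow> real \<Rightarrow> real^'n \<Rightarrow> nat \<Rightarrow> real^'n" where
  "opinion_traj W \<beta> \<gamma> s g h x0 k = ((opinion_step W \<beta> \<gamma> s g h) ^^ k) x0"

end

theory Submission
  imports Defs
begin

text \<open>
  While every opinion stays in [0,1], the stubborn weights lie in [0,\<beta>], so each step is a
  combination of s, the neighbours' opinions, g and h with nonnegative coefficients summing to 1.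
  Hence the limit x* is a fixed point with g \<le> x* \<le> h (a maximum principle: an extreme
  coordinate outside [g,h] would be pulled strictly inside). On that box the absolute values in
  the weights disappear and the fixed-point equation becomes linear in x*. Pairing it with the
  positive left eigenvector c of W turns W x* into \<lambda> x*, leaving a scalar equation for
  c \<bullet> x*; its coefficient 1 - \<lambda> - (h - g)\<gamma> is positive because
  \<lambda> is at most the maximal row sum of W.
\<close>

lemma row_sum_le_norm_inf:
  fixes W :: "real^'n^'n"
  shows "(\<Sum>j\<in>UNIV. W$i$j) \<le> norm_inf W"
proof -
  have "(\<Sum>j\<in>UNIV. W$i$j) \<le> (\<Sum>j\<in>UNIV. \<bar>W$i$j\<bar>)" by (rule sum_mono) simp
  also have "\<dots> \<le> norm_inf W" unfolding norm_inf_def by (rule Max_ge) auto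
  finally show ?thesis .
qed

lemma inner_matrix_vector_left_eigenvector:
  fixes W :: "real^'n^'n" and v x :: "real^'n"
  assumes "transpose W *v v = lam *\<^sub>R v"
  shows "v \<bullet> (W *v x) = lam * (v \<bullet> x)"
proof -
  have "v \<bullet> (W *v x) = (transpose W *v v) \<bullet> x" by (simp flip: dot_lmul_matrix)
  then show ?thesis using assms by simp
qed

lemma left_eigenvalue_le_norm_inf:
  fixes W :: "real^'n^'n"
  assumes c_pos: "\<And>i. c$i > 0" and c_eig: "transpose W *v c = lam *\<^sub>R c"
  shows "lam \<le> norm_inf W"
proof -
  have "lam * (c \<bullet> 1) = c \<bullet> (W *v 1)"
    by (simp add: inner_matrix_vector_left_eigenvector[OF c_eig])
  also have "\<dots> \<le> c \<bullet> (norm_inf W *\<^sub>R 1)"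
    unfolding inner_vec_def
  proof (rule sum_mono)
    fix i
    have "(W *v 1) $ i \<le> norm_inf W"
      using row_sum_le_norm_inf[of W i] by (simp add: matrix_vector_mult_def)
    then show "c$i \<bullet> (W *v 1) $ i \<le> c$i \<bullet> (norm_inf W *\<^sub>R 1) $ i"
      using c_pos[of i] by simp
  qed
  also have "\<dots> = norm_inf W * (c \<bullet> 1)" by simp
  finally show ?thesis
    using c_pos by (simp add: inner_vec_def sum_pos)
qed

lemma left_eigenvector_average:
  fixes W :: "real^'n^'n" and v x s :: "real^'n"
  assumes eig: "transpose W *v v = lam *\<^sub>R v" and v_sum: "(\<Sum>i\<in>UNIV. v$i) = 1"
    and eq: "\<And>i. a * x$i = (k - (\<Sum>j\<in>UNIV. W$i$j)) * s$i + (W *v x)$i + e"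
  shows "(a - lam) * (v \<bullet> x)
           = k * (\<Sum>i\<in>UNIV. v$i * s$i) - (\<Sum>i\<in>UNIV. v$i * s$i * (\<Sum>j\<in>UNIV. W$i$j)) + e"
proof -
  have "a * (v \<bullet> x) = (\<Sum>i\<in>UNIV. v$i * (a * x$i))"
    by (simp add: inner_vec_def sum_distrib_left mult.left_commute)
  also have "\<dots> = (\<Sum>i\<in>UNIV. k * (v$i * s$i) - v$i * s$i * (\<Sum>j\<in>UNIV. W$i$j)
                       + v$i * (W *v x)$i + e * v$i)"
    by (rule sum.cong) (simp_all add: eq algebra_simps)
  also have "\<dots> = k * (\<Sum>i\<in>UNIV. v$i * s$i) - (\<Sum>i\<in>UNIV. v$i * s$i * (\<Sum>j\<in>UNIV. W$i$j))
                  + v \<bullet> (W *v x) + e"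
    by (simp add: sum.distrib sum_subtractf inner_vec_def v_sum flip: sum_distrib_left)
  finally show ?thesis
    by (simp add: inner_matrix_vector_left_eigenvector[OF eig] algebra_simps)
qed

lemma inner_positive_left_eigenvector_eq:
  fixes W :: "real^'n^'n" and c x s :: "real^'n"
  assumes c_pos: "\<And>i. c$i > 0" and c_eig: "transpose W *v c = lam *\<^sub>R c"
    and eq: "\<And>i. a * x$i = (k - (\<Sum>j\<in>UNIV. W$i$j)) * s$i + (W *v x)$i + e"
    and lam_less: "lam < a"
  shows "c \<bullet> x = (k * (\<Sum>i\<in>UNIV. (c$i / (\<Sum>j\<in>UNIV. c$j)) * s$i)
                    - (\<Sum>i\<in>UNIV. (c$i / (\<Sum>j\<in>UNIV. c$j)) * s$i * (\<Sum>j\<in>UNIV. W$i$j)) + e)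
                   / (a - lam) * (c \<bullet> 1)"
proof -
  define S where "S = (\<Sum>j\<in>UNIV. c$j)"
  define v where "v = (1 / S) *\<^sub>R c"
  have S_pos: "0 < S" unfolding S_def using c_pos by (simp add: sum_pos)
  have v_eig: "transpose W *v v = lam *\<^sub>R v"
    using c_eig by (simp add: v_def matrix_vector_mult_scaleR)
  have v_sum: "(\<Sum>i\<in>UNIV. v$i) = 1"
    using S_pos by (simp add: v_def S_def flip: sum_divide_distrib)
  have "c \<bullet> 1 = S" by (simp add: S_def inner_vec_def)
  then have "c \<bullet> x = (v \<bullet> x) * (c \<bullet> 1)"
    using S_pos by (simp add: v_def)
  also have "v \<bullet> x = (k * (\<Sum>i\<in>UNIV. v$i * s$i)
                            - (\<Sum>i\<in>UNIV. v$i * s$i * (\<Sum>j\<in>UNIV. W$i$j)) + e) / (a - lam)"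
    using left_eigenvector_average[OF v_eig v_sum eq] lam_less by (simp add: eq_divide_eq mult.commute)
  finally show ?thesis
    unfolding v_def S_def by simp
qed

lemma wbar_bounds:
  assumes "0 \<le> \<gamma>" "\<gamma> \<le> \<beta>" "\<bar>x - h\<bar> \<le> 1"
  shows "0 \<le> wbar \<beta> \<gamma> h x" "wbar \<beta> \<gamma> h x \<le> \<beta>"
proof -
  have "\<gamma> * \<bar>x - h\<bar> \<le> \<gamma>" using assms by (simp add: mult_left_le)
  then show "0 \<le> wbar \<beta> \<gamma> h x" using assms unfolding wbar_def by linarith
  show "wbar \<beta> \<gamma> h x \<le> \<beta>" using assms unfolding wbar_def by simp
qed

lemma wund_eq_wbar: "wund = wbar"
  by (simp add: fun_eq_iff wund_def wbar_def)

lemma opinion_step_on_interval: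
  assumes "g \<le> x$i" "x$i \<le> h"
  shows "opinion_step W \<beta> \<gamma> s g h x $ i
           = (1 - 2*\<beta> + (h - g)*\<gamma> - (\<Sum>j\<in>UNIV. W$i$j)) * s$i + (W *v x)$i
             + (h + g)*\<beta> + (g^2 - h^2)*\<gamma> + (h - g)*\<gamma> * x$i"
  using assms
  by (simp add: opinion_step_def alpha_def wbar_def wund_def matrix_vector_mult_def
      abs_if algebra_simps power2_eq_square)

locale opinion_dynamics =
  fixes W :: "real^'n^'n" and \<beta> \<gamma> :: real and s :: "real^'n" and g h :: real
  assumes W_nonneg: "\<And>i j. 0 \<le> W$i$j"
    and weights: "0 \<le> \<gamma>" "\<gamma> \<le> \<beta>"
    and row_sum_margin: "\<And>i. 2*\<beta> < 1 - (\<Sum>j\<in>UNIV. W$i$j)"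
    and g_h: "0 \<le> g" "h \<le> 1"
    and s_between: "\<And>i. g \<le> s$i" "\<And>i. s$i \<le> h"
begin

abbreviation step :: "real^'n \<Rightarrow> real^'n"
  where "step \<equiv> opinion_step W \<beta> \<gamma> s g h"

lemma g_le_h: "g \<le> h"
  using s_between order_trans by blast

lemma row_sum_nonneg: "0 \<le> (\<Sum>j\<in>UNIV. W$i$j)"
  by (simp add: W_nonneg sum_nonneg)

lemma step_bounds:
  assumes x_i: "0 \<le> x$i" "x$i \<le> 1"
    and upper: "\<And>j. x$j \<le> M" and lower: "\<And>j. m \<le> x$j"
  shows "step x $ i \<le> (1 - (\<Sum>j\<in>UNIV. W$i$j)) * h + (\<Sum>j\<in>UNIV. W$i$j) * M"
    and "(1 - (\<Sum>j\<in>UNIV. W$i$j)) * g + (\<Sum>j\<in>UNIV. W$i$j) * m \<le> step x $ i"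
proof -
  define r where "r = (\<Sum>j\<in>UNIV. W$i$j)"
  define u where "u = wbar \<beta> \<gamma> h (x$i)"
  define v where "v = wund \<beta> \<gamma> g (x$i)"
  define a where "a = 1 - r - u - v"
  have u: "0 \<le> u" "u \<le> \<beta>"
    unfolding u_def using wbar_bounds weights x_i g_h g_le_h by auto
  have v: "0 \<le> v" "v \<le> \<beta>"
    unfolding v_def wund_eq_wbar using wbar_bounds weights x_i g_h g_le_h by auto
  have a: "0 \<le> a" using u v row_sum_margin[of i] unfolding a_def r_def by linarith
  have step_eq: "step x $ i = a * s$i + (\<Sum>j\<in>UNIV. W$i$j * x$j) + u * h + v * g"
    unfolding opinion_step_def alpha_def a_def r_def u_def v_def by simp
  have "(\<Sum>j\<in>UNIV. W$i$j * x$j) \<le> r * M"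
    unfolding r_def sum_distrib_right by (rule sum_mono) (simp add: W_nonneg mult_left_mono upper)
  moreover have "a * s$i \<le> a * h" "v * g \<le> v * h"
    using a v s_between[of i] g_le_h by (simp_all add: mult_left_mono)
  ultimately show "step x $ i \<le> (1 - r) * h + r * M"
    using step_eq unfolding a_def by (simp add: algebra_simps)
  have "r * m \<le> (\<Sum>j\<in>UNIV. W$i$j * x$j)"
    unfolding r_def sum_distrib_right by (rule sum_mono) (simp add: W_nonneg mult_left_mono lower)
  moreover have "a * g \<le> a * s$i" "u * g \<le> u * h"
    using a u s_between[of i] g_le_h by (simp_all add: mult_left_mono)
  ultimately show "(1 - r) * g + r * m \<le> step x $ i"
    using step_eq unfolding a_def by (simp add: algebra_simps)
qed

lemma step_in_unit_cube:
  assumes "\<And>j. 0 \<le> x$j \<and> x$j \<le> 1"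
  shows "0 \<le> step x $ i \<and> step x $ i \<le> 1"
proof -
  define r where "r = (\<Sum>j\<in>UNIV. W$i$j)"
  have r: "0 \<le> r" "2*\<beta> < 1 - r" "0 \<le> \<beta>"
    using row_sum_nonneg row_sum_margin weights unfolding r_def by (auto intro: order_trans)
  have "step x $ i \<le> (1 - r) * h + r * 1" "(1 - r) * g + r * 0 \<le> step x $ i"
    using step_bounds[of x i 1 0] assms unfolding r_def by auto
  moreover have "(1 - r) * h \<le> 1 - r" "0 \<le> (1 - r) * g"
    using r g_h by (simp_all add: mult_left_le)
  ultimately show ?thesis by linarith
qed

lemma traj_in_unit_cube:
  assumes "\<And>j. 0 \<le> x0$j \<and> x0$j \<le> 1"
  shows "0 \<le> opinion_traj W \<beta> \<gamma> s g h x0 k $ i \<and> opinion_traj W \<beta> \<gamma> s g h x0 k $ i \<le> 1"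
proof (induction k arbitrary: i)
  case 0
  then show ?case using assms by (simp add: opinion_traj_def)
next
  case (Suc k)
  then show ?case using step_in_unit_cube by (simp add: opinion_traj_def)
qed

lemma tendsto_step: "X \<longlonglongrightarrow> x \<Longrightarrow> (\<lambda>k. step (X k)) \<longlonglongrightarrow> step x"
  unfolding opinion_step_def alpha_def wbar_def wund_def
  by (intro tendsto_intros tendsto_vec_nth)

lemma traj_limit_fixpoint:
  assumes "opinion_traj W \<beta> \<gamma> s g h x0 \<longlonglongrightarrow> x"
  shows "step x = x"
proof -
  have "(\<lambda>k. step (opinion_traj W \<beta> \<gamma> s g h x0 k)) \<longlonglongrightarrow> step x"
    using assms by (rule tendsto_step)
  moreover have "(\<lambda>k. step (opinion_traj W \<beta> \<gamma> s g h x0 k)) \<longlonglongrightarrow> x"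
    using LIMSEQ_Suc[OF assms] by (simp add: opinion_traj_def)
  ultimately show ?thesis by (rule LIMSEQ_unique)
qed

lemma traj_limit_in_unit_cube:
  assumes "\<And>j. 0 \<le> x0$j \<and> x0$j \<le> 1" and "opinion_traj W \<beta> \<gamma> s g h x0 \<longlonglongrightarrow> x"
  shows "0 \<le> x$i \<and> x$i \<le> 1"
proof -
  have lim: "(\<lambda>k. opinion_traj W \<beta> \<gamma> s g h x0 k $ i) \<longlonglongrightarrow> x$i"
    using assms(2) by (rule tendsto_vec_nth)
  show ?thesis
    using LIMSEQ_le_const[OF lim] LIMSEQ_le_const2[OF lim] traj_in_unit_cube[OF assms(1)] by blast
qed

text \<open>At a maximal (minimal) coordinate the step is at most (at least) a combination of h (g)
  and that extreme value with positive weight on h (g).\<close>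

lemma fixpoint_between_g_h:
  assumes fixpoint: "step x = x" and unit: "\<And>j. 0 \<le> x$j \<and> x$j \<le> 1"
  shows "g \<le> x$i \<and> x$i \<le> h"
proof -
  obtain iM where iM: "\<And>j. x$j \<le> x$iM"
    using Max_in[of "range (\<lambda>j. x$j)"] Max_ge[of "range (\<lambda>j. x$j)"] by fastforce
  obtain im where im: "\<And>j. x$im \<le> x$j"
    using Min_in[of "range (\<lambda>j. x$j)"] Min_le[of "range (\<lambda>j. x$j)"] by fastforce
  define r where "r i = (\<Sum>j\<in>UNIV. W$i$j)" for i
  have margin: "0 < 1 - r i" for i
    using row_sum_margin[of i] weights unfolding r_def by linarith
  have "x$iM \<le> (1 - r iM) * h + r iM * x$iM"
    using step_bounds(1)[of x iM "x$iM" "x$im"] fixpoint unit iM im unfolding r_def by auto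
  then have "(1 - r iM) * x$iM \<le> (1 - r iM) * h" by (simp add: algebra_simps)
  then have "x$iM \<le> h" using margin[of iM] by simp
  moreover have "(1 - r im) * g + r im * x$im \<le> x$im"
    using step_bounds(2)[of x im "x$iM" "x$im"] fixpoint unit iM im unfolding r_def by auto
  then have "(1 - r im) * g \<le> (1 - r im) * x$im" by (simp add: algebra_simps)
  then have "g \<le> x$im" using margin[of im] by simp
  ultimately show ?thesis using iM[of i] im[of i] by linarith
qed

lemma traj_limit_equation:
  assumes "\<And>j. 0 \<le> x0$j \<and> x0$j \<le> 1" and "opinion_traj W \<beta> \<gamma> s g h x0 \<longlonglongrightarrow> x"
  shows "(1 - (h - g)*\<gamma>) * x$i
      = (1 - 2*\<beta> + (h - g)*\<gamma> - (\<Sum>j\<in>UNIV. W$i$j)) * s$i + (W *v x)$i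
        + ((h + g)*\<beta> + (g^2 - h^2)*\<gamma>)"
proof -
  have fixpoint: "step x = x"
    using assms(2) by (rule traj_limit_fixpoint)
  have "g \<le> x$i \<and> x$i \<le> h"
    using fixpoint_between_g_h[OF fixpoint traj_limit_in_unit_cube[OF assms]] .
  then show ?thesis
    using opinion_step_on_interval[of g x i h W \<beta> \<gamma> s] fixpoint by (simp add: algebra_simps)
qed

end

theorem corollary1:
  fixes W :: "real^'n^'n" and c s x0 xstar :: "real^'n"
    and \<beta> \<gamma> g h lam :: real
  assumes W_nonneg: "\<And>i j. W$i$j \<ge> 0"
    and W_diag: "\<And>i. W$i$i = 0"
    and lam: "lam = spec_radius W"
    and c_pos: "\<And>i. c$i > 0"
    and c_eig: "transpose W *v c = lam *\<^sub>R c"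
    and beta_gamma: "\<beta> \<ge> \<gamma>" "\<gamma> \<ge> 0"
    and norm_cond: "1 - max (norm_inf W) (norm_one W) > max (2*\<beta>) (4*\<gamma>)"
    and s_range: "\<And>i. 0 \<le> s$i \<and> s$i \<le> 1"
    and g_h: "0 \<le> g" "g \<le> Min (range (\<lambda>i. s$i))"
             "Max (range (\<lambda>i. s$i)) \<le> h" "h \<le> 1"
    and x0_range: "\<And>i. 0 \<le> x0$i \<and> x0$i \<le> 1"
    and conv: "opinion_traj W \<beta> \<gamma> s g h x0 \<longlonglongrightarrow> xstar"
  shows "c \<bullet> xstar =
     ((1 - 2*\<beta> + (h - g)*\<gamma>) * (\<Sum>i\<in>UNIV. (c$i / (\<Sum>j\<in>UNIV. c$j)) * s$i)
       - (\<Sum>i\<in>UNIV. (c$i / (\<Sum>j\<in>UNIV. c$j)) * s$i * (\<Sum>j\<in>UNIV. W$i$j))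
       + (h + g)*\<beta> + (g^2 - h^2)*\<gamma>)
     / (1 - lam + (g - h)*\<gamma>) * (c \<bullet> 1)"
proof -
  have s_between: "g \<le> s$i" "s$i \<le> h" for i
    using g_h(2,3) Min_le[of "range (\<lambda>i. s$i)"] Max_ge[of "range (\<lambda>i. s$i)"] by force+
  interpret opinion_dynamics W \<beta> \<gamma> s g h
  proof
    show "2*\<beta> < 1 - (\<Sum>j\<in>UNIV. W$i$j)" for i
      using row_sum_le_norm_inf[of W i] norm_cond by linarith
  qed (use W_nonneg beta_gamma g_h s_between in auto)
  have "lam < 1 - (h - g)*\<gamma>"
  proof -
    have "(h - g) * \<gamma> \<le> \<gamma>"
      using mult_right_mono[of "h - g" 1 \<gamma>] g_h beta_gamma by simp
    then show ?thesis
      using left_eigenvalue_le_norm_inf[OF c_pos c_eig] norm_cond beta_gamma by linarith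
  qed
  from inner_positive_left_eigenvector_eq[OF c_pos c_eig traj_limit_equation[OF x0_range conv] this]
  show ?thesis by (simp add: algebra_simps)
qed

end
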